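(* Let $\mathcal{C}=\{C_1,\ldots,C_r\}$ be a partition of $C$ and let $F$ be a joint distribution of the component lifetimes without ties. Suppose there exists a function $\gamma\colon\prod_{j=1}^r\{0,\ldots,n_j\}\to\mathbb{R}$ with the following property. For every semicoherent structure $\phi$ admitting a modular decomposition $\phi(\mathbf{x})=\psi(\chi_1(\mathbf{x}^{C_1}),\ldots,\chi_r(\mathbf{x}^{C_r}))$, with $\chi_j\colon\{0,1\}^{C_j}\to\{0,1\}$ and $\psi\colon\{0,1\}^r\to\{0,1\}$ semicoherent, and for every $0\le k\le n$, $$\overline{P}_{n-k}=\sum_{\mathbf{a}\in\mathcal{T}_k}\gamma(\mathbf{a})\,\widehat\psi\big(\overline{P}_{1,n_1-a_1},\ldots,\overline{P}_{r,n_r-a_r}\big).$$ Then the relative quality function $q$ associated with $F$ is $\mathcal{C}$-decomposable.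
   Context: Consider components $C=[n]$ with random lifetimes $T_1,\ldots,T_n$ with joint distribution $F$ having no ties. Subsets are identified with Boolean vectors. A structure $\phi\colon\{0,1\}^m\to\{0,1\}$ is semicoherent if it is nondecreasing in each variable, $\phi(\mathbf{0})=0$ and $\phi(\mathbf{1})=1$. The relative quality function is $q(A)=\Pr(\max_{i\notin A}T_i<\min_{i\in A}T_i)$, with $q(\varnothing)=q([n])=1$. For a partition $\mathcal{C}=\{C_1,\ldots,C_r\}$ of $C$ into nonempty blocks, write $n_j=|C_j|$, $A_j=A\cap C_j$, $\mathbf{x}^{C_j}=(x_i)_{i\in C_j}$, and $q^{C_j}(A)=\Pr(\max_{i\in C_j\setminus A}T_i<\min_{i\in A}T_i)$ for $A\subseteq C_j$. The function $q$ is $\mathcal{C}$-decomposable if there is $\tilde c\colon\prod_j\{0,\ldots,n_j\}\to\mathbb{R}$ with $q(A)=\tilde c(|A_1|,\ldots,|A_r|)\prod_j q^{C_j}(A_j)$ for all $A\subseteq C$. The tail probability signatures are $\overline{P}_k=\sum_{|A|=n-k}q(A)\phi(A)$ for $(C,\phi)$ and $\overline{P}_{j,k}=\sum_{A\subseteq C_j,|A|=n_j-k}q^{C_j}(A)\chi_j(A)$ for $(C_j,\chi_j)$. Let $\mathcal{T}_k=\{\mathbf{a}\in\mathbb{N}^r:0\le a_j\le n_j,\ \sum_j a_j=k\}$. The multilinear extension is $\widehat\psi(\mathbf{z})=\sum_{B\subseteq[r]}\psi(B)\prod_{j\in B}z_j\prod_{j\notin B}(1-z_j)$. *)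

theory Defs
  imports "HOL-Probability.Probability"
begin

text \<open>Components are the elements of a finite set S (the whole system is {..<n});
  subsets are identified with Boolean vectors, so structures are predicates on subsets.\<close>

definition semicoherent :: "'c set \<Rightarrow> ('c set \<Rightarrow> bool) \<Rightarrow> bool" where
  "semicoherent S f \<longleftrightarrow>
     (\<forall>A B. A \<subseteq> B \<and> B \<subseteq> S \<longrightarrow> f A \<longrightarrow> f B) \<and> \<not> f {} \<and> f S"

text \<open>Relative quality function of the components in S:
  q^S(A) = Pr(max_{i in S - A} T_i < min_{i in A} T_i)  (vacuous conditions give 1).\<close>

definition rel_quality :: "'a measure \<Rightarrow> ('c \<Rightarrow> 'a \<Rightarrow> real) \<Rightarrow> 'c set \<Rightarrow> 'c set \<Rightarrow> real" where
  "rel_quality M T S A =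
     measure M {\<omega> \<in> space M. \<forall>i \<in> S - A. \<forall>l \<in> A. T i \<omega> < T l \<omega>}"

definition tail_sig :: "'a measure \<Rightarrow> ('c \<Rightarrow> 'a \<Rightarrow> real) \<Rightarrow> 'c set \<Rightarrow> ('c set \<Rightarrow> bool) \<Rightarrow> nat \<Rightarrow> real" where
  "tail_sig M T S \<phi> k =
     (\<Sum>A \<in> {A. A \<subseteq> S \<and> card A = card S - k}. rel_quality M T S A * (if \<phi> A then 1 else 0))"

definition multilinear_ext :: "nat \<Rightarrow> (nat set \<Rightarrow> bool) \<Rightarrow> (nat \<Rightarrow> real) \<Rightarrow> real" where
  "multilinear_ext r \<psi> z =
     (\<Sum>B \<in> Pow {..<r}. (if \<psi> B then 1 else 0) * (\<Prod>j\<in>B. z j) * (\<Prod>j\<in>{..<r} - B. 1 - z j))"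

definition is_partition :: "nat \<Rightarrow> nat \<Rightarrow> (nat \<Rightarrow> nat set) \<Rightarrow> bool" where
  "is_partition n r Cb \<longleftrightarrow>
     (\<forall>j<r. Cb j \<noteq> {}) \<and>
     (\<forall>j<r. \<forall>j'<r. j \<noteq> j' \<longrightarrow> Cb j \<inter> Cb j' = {}) \<and>
     (\<Union>j<r. Cb j) = {..<n}"

text \<open>T_k: tuples (a_0,...,a_{r-1}) with 0 <= a_j <= n_j and sum k;
  represented as functions nat => nat that vanish outside {..<r}.\<close>

definition tuples :: "nat \<Rightarrow> (nat \<Rightarrow> nat set) \<Rightarrow> nat \<Rightarrow> (nat \<Rightarrow> nat) set" where
  "tuples r Cb k =
     {a. (\<forall>j<r. a j \<le> card (Cb j)) \<and> (\<forall>j\<ge>r. a j = 0) \<and> (\<Sum>j<r. a j) = k}"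

definition decomposable :: "'a measure \<Rightarrow> (nat \<Rightarrow> 'a \<Rightarrow> real) \<Rightarrow> nat \<Rightarrow> nat \<Rightarrow> (nat \<Rightarrow> nat set) \<Rightarrow> bool" where
  "decomposable M T n r Cb \<longleftrightarrow>
     (\<exists>c :: (nat \<Rightarrow> nat) \<Rightarrow> real. \<forall>A. A \<subseteq> {..<n} \<longrightarrow>
        rel_quality M T {..<n} A =
          c (\<lambda>j. if j < r then card (A \<inter> Cb j) else 0) *
          (\<Prod>j<r. rel_quality M T (Cb j) (A \<inter> Cb j)))"

end

theory Submission
  imports Defs
begin

text \<open>
  Fix a nonempty set A0 of components and probe the hypothesis with the
  modular structure whose modules are the up-sets chi_j(D) = (A0 \<inter> C_j \<subseteq> D, D \<noteq> {})
  and whose organizing structure is psi(B) = (J \<subseteq> B), J being the set of blocks met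
  by A0.  The composite structure is then "A0 \<subseteq> A", so among the sets of size |A0|
  only A0 itself works, and the left-hand tail signature at level n - |A0| is q(A0).
  On the right, the multilinear extension of psi is the product of its arguments over J;
  the module signature at level a_j vanishes when a_j < |A0 \<inter> C_j| and equals
  q^{C_j}(A0 \<inter> C_j) at a_j = |A0 \<inter> C_j|.  Since the tuples a sum to |A0|, only the
  block profile of A0 survives, giving q(A0) = gamma(profile) * prod_j q^{C_j}(A0 \<inter> C_j).
  Setting the constant to 1 on the zero profile also covers A0 = {}.  Only the probability-space
  assumption (for q({}) = 1) is used.
\<close>

text \<open>The multilinear extension of the indicator of the up-set of J is the monomial
  z^J: the remaining coordinates contribute \<Prod>(z_j + (1 - z_j)) = 1.\<close>

lemma multilinear_ext_upset:
  assumes "J \<subseteq> {..<r}"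
  shows "multilinear_ext r (\<lambda>B. J \<subseteq> B) z = (\<Prod>j\<in>J. z j)"
proof -
  define K where "K = {..<r} - J"
  have fin: "finite K" "finite J" using assms finite_subset unfolding K_def by auto
  have upsets: "{B \<in> Pow {..<r}. J \<subseteq> B} = (\<lambda>B'. J \<union> B') ` Pow K"
  proof (rule set_eqI, rule iffI)
    fix B assume "B \<in> {B \<in> Pow {..<r}. J \<subseteq> B}"
    then have "B = J \<union> (B - J)" "B - J \<in> Pow K" unfolding K_def by auto
    then show "B \<in> (\<lambda>B'. J \<union> B') ` Pow K" by blast
  qed (use assms in \<open>auto simp: K_def\<close>)
  have inj: "inj_on (\<lambda>B'. J \<union> B') (Pow K)"
    unfolding inj_on_def K_def by blast
  have "multilinear_ext r (\<lambda>B. J \<subseteq> B) z =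
     (\<Sum>B \<in> {B \<in> Pow {..<r}. J \<subseteq> B}. (\<Prod>j\<in>B. z j) * (\<Prod>j\<in>{..<r} - B. 1 - z j))"
    unfolding multilinear_ext_def by (subst sum.inter_filter) (auto intro!: sum.cong)
  also have "\<dots> = (\<Sum>B' \<in> Pow K. (\<Prod>j\<in>J \<union> B'. z j) * (\<Prod>j\<in>{..<r} - (J \<union> B'). 1 - z j))"
    unfolding upsets using inj by (simp add: sum.reindex)
  also have "\<dots> = (\<Sum>B' \<in> Pow K. (\<Prod>j\<in>J. z j) * ((\<Prod>j\<in>B'. z j) * (\<Prod>j\<in>K - B'. 1 - z j)))"
  proof (rule sum.cong[OF refl])
    fix B' assume B': "B' \<in> Pow K"
    then have "finite B'" "J \<inter> B' = {}" using fin finite_subset unfolding K_def by auto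
    then have "(\<Prod>j\<in>J \<union> B'. z j) = (\<Prod>j\<in>J. z j) * (\<Prod>j\<in>B'. z j)"
      using fin by (simp add: prod.union_disjoint)
    moreover have "{..<r} - (J \<union> B') = K - B'" unfolding K_def by auto
    ultimately show "(\<Prod>j\<in>J \<union> B'. z j) * (\<Prod>j\<in>{..<r} - (J \<union> B'). 1 - z j)
        = (\<Prod>j\<in>J. z j) * ((\<Prod>j\<in>B'. z j) * (\<Prod>j\<in>K - B'. 1 - z j))" by simp
  qed
  also have "\<dots> = (\<Prod>j\<in>J. z j) * (\<Prod>j\<in>K. z j + (1 - z j))"
    by (simp only: prod_add[OF fin(1)] sum_distrib_left)
  finally show ?thesis by simp
qed

text \<open>Tail signatures of a structure all of whose paths contain D0.  At the level of
  |D0| only D0 itself can be a path, so the signature is q^S(D0); below that level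
  there are no paths at all.\<close>

lemma tail_sig_minimal_path:
  assumes "finite S" "D0 \<subseteq> S"
    and above: "\<forall>D \<subseteq> S. \<phi> D \<longrightarrow> D0 \<subseteq> D" and "\<phi> D0"
  shows "tail_sig M T S \<phi> (card S - card D0) = rel_quality M T S D0"
proof -
  have level: "card S - (card S - card D0) = card D0"
    using assms(1,2) card_mono by fastforce
  have fin: "finite {D. D \<subseteq> S \<and> card D = card D0}"
    by (rule finite_subset[of _ "Pow S"]) (use assms(1) in auto)
  have "tail_sig M T S \<phi> (card S - card D0) =
      (\<Sum>D \<in> {D. D \<subseteq> S \<and> card D = card D0}. if D = D0 then rel_quality M T S D else 0)"
    unfolding tail_sig_def level
  proof (rule sum.cong[OF refl])
    fix D assume D: "D \<in> {D. D \<subseteq> S \<and> card D = card D0}"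
    then have "finite D" using assms(1) finite_subset by blast
    then have "\<phi> D \<longleftrightarrow> D = D0" using D above \<open>\<phi> D0\<close> card_subset_eq[of D D0] by auto
    then show "rel_quality M T S D * (if \<phi> D then 1 else 0) =
        (if D = D0 then rel_quality M T S D else 0)" by auto
  qed
  also have "\<dots> = rel_quality M T S D0"
    using fin assms(2) by (subst sum.delta) auto
  finally show ?thesis .
qed

lemma tail_sig_below_minimal_path:
  assumes "finite S" "D0 \<subseteq> S"
    and above: "\<forall>D \<subseteq> S. \<phi> D \<longrightarrow> D0 \<subseteq> D" and small: "m < card D0"
  shows "tail_sig M T S \<phi> (card S - m) = 0"
proof -
  have "m \<le> card S" using small card_mono[OF assms(1,2)] by linarith
  then have level: "card S - (card S - m) = m" by simp
  have "\<not> \<phi> D" if "D \<subseteq> S" "card D = m" for D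
  proof
    assume "\<phi> D"
    then have "card D0 \<le> card D"
      using above that assms(1) card_mono finite_subset by metis
    then show False using small that(2) by linarith
  qed
  then show ?thesis unfolding tail_sig_def level by (auto intro!: sum.neutral)
qed

text \<open>Two tuples of the same total, one dominating the other, coincide.  This is what
  singles out the block profile in the sum over T_k.\<close>

lemma tuples_dominated_eq:
  assumes "a \<in> tuples r Cb k" "b \<in> tuples r Cb k" and dom: "\<forall>j<r. b j \<le> a j"
  shows "a = b"
proof -
  have "(\<Sum>j<r. b j) = (\<Sum>j<r. a j)" using assms(1,2) unfolding tuples_def by simp
  then have "\<forall>j\<in>{..<r}. b j = a j" using sum_mono_inv[of b "{..<r}" a] dom by auto
  moreover have "\<forall>j\<ge>r. a j = 0 \<and> b j = 0" using assms(1,2) unfolding tuples_def by simp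
  ultimately show ?thesis by (intro ext) (metis lessThan_iff not_le)
qed

lemma finite_tuples: "finite (tuples r Cb k)"
proof -
  let ?extend = "\<lambda>f j. if j < r then f j else 0"
  have "tuples r Cb k \<subseteq> ?extend ` (Pi\<^sub>E {..<r} (\<lambda>_. {..k}))"
  proof
    fix a assume a: "a \<in> tuples r Cb k"
    have "a j \<le> k" if "j < r" for j
      using a member_le_sum[of j "{..<r}" a] that unfolding tuples_def by auto
    then have "restrict a {..<r} \<in> Pi\<^sub>E {..<r} (\<lambda>_. {..k})" by auto
    moreover have "a = ?extend (restrict a {..<r})"
      using a unfolding tuples_def by (auto simp: fun_eq_iff)
    ultimately show "a \<in> ?extend ` (Pi\<^sub>E {..<r} (\<lambda>_. {..k}))" by blast
  qed
  then show ?thesis by (rule finite_subset) (intro finite_imageI finite_PiE; simp)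
qed

definition block_profile :: "nat \<Rightarrow> (nat \<Rightarrow> nat set) \<Rightarrow> nat set \<Rightarrow> nat \<Rightarrow> nat" where
  "block_profile r Cb A = (\<lambda>j. if j < r then card (A \<inter> Cb j) else 0)"

lemma partition_blocks:
  assumes "is_partition n r Cb" "j < r"
  shows "Cb j \<subseteq> {..<n}" "finite (Cb j)"
proof -
  show sub: "Cb j \<subseteq> {..<n}" using assms unfolding is_partition_def by blast
  show "finite (Cb j)" using finite_subset[OF sub] by simp
qed

lemma block_profile_in_tuples:
  assumes part: "is_partition n r Cb" and "A \<subseteq> {..<n}"
  shows "block_profile r Cb A \<in> tuples r Cb (card A)"
proof -
  note blocks = partition_blocks[OF part]
  have disjoint: "\<forall>j\<in>{..<r}. \<forall>i\<in>{..<r}. j \<noteq> i \<longrightarrow> (A \<inter> Cb j) \<inter> (A \<inter> Cb i) = {}"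
    using part unfolding is_partition_def by blast
  have "A = (\<Union>j<r. A \<inter> Cb j)" using assms unfolding is_partition_def by auto
  also have "card \<dots> = (\<Sum>j<r. card (A \<inter> Cb j))"
    using blocks(2) disjoint by (intro card_UN_disjoint) auto
  finally show ?thesis
    unfolding tuples_def block_profile_def using blocks(2) by (auto intro: card_mono)
qed

lemma quality_factorizes:
  fixes \<gamma> :: "(nat \<Rightarrow> nat) \<Rightarrow> real"
  assumes "prob_space M" and part: "is_partition n r Cb"
    and hyp: "\<forall>(chi :: nat \<Rightarrow> nat set \<Rightarrow> bool) (\<psi> :: nat set \<Rightarrow> bool).
       (\<forall>j<r. semicoherent (Cb j) (chi j)) \<longrightarrow> semicoherent {..<r} \<psi> \<longrightarrow>
       (\<forall>k\<le>n.
          tail_sig M T {..<n} (\<lambda>A. \<psi> {j \<in> {..<r}. chi j (A \<inter> Cb j)}) (n - k) =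
          (\<Sum>a \<in> tuples r Cb k. \<gamma> a *
             multilinear_ext r \<psi> (\<lambda>j. tail_sig M T (Cb j) (chi j) (card (Cb j) - a j))))"
    and A0: "A0 \<subseteq> {..<n}" "A0 \<noteq> {}"
  shows "rel_quality M T {..<n} A0 =
           \<gamma> (block_profile r Cb A0) * (\<Prod>j<r. rel_quality M T (Cb j) (A0 \<inter> Cb j))"
proof -
  note blocks = partition_blocks[OF part]
  have covered: "\<exists>j<r. x \<in> Cb j" if "x \<in> A0" for x
    using part A0(1) that unfolding is_partition_def by auto
  define J where "J = {j. j < r \<and> A0 \<inter> Cb j \<noteq> {}}"
  define chi where "chi j D = (A0 \<inter> Cb j \<subseteq> D \<and> D \<noteq> {})" for j and D :: "nat set"
  define \<psi> where "\<psi> B = (J \<subseteq> B)" for B :: "nat set"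
  define z where "z a j = tail_sig M T (Cb j) (chi j) (card (Cb j) - a j)" for a j
  define b where "b = block_profile r Cb A0"
  have Jr: "J \<subseteq> {..<r}" and "J \<noteq> {}"
    using covered A0(2) unfolding J_def by auto
  have "\<forall>j<r. semicoherent (Cb j) (chi j)" "semicoherent {..<r} \<psi>"
    using part \<open>J \<noteq> {}\<close> Jr unfolding semicoherent_def chi_def \<psi>_def is_partition_def by auto
  moreover have "card A0 \<le> n" using card_mono[OF _ A0(1)] by simp
  ultimately have hyp_A0: "tail_sig M T {..<n} (\<lambda>A. \<psi> {j \<in> {..<r}. chi j (A \<inter> Cb j)}) (n - card A0)
      = (\<Sum>a \<in> tuples r Cb (card A0). \<gamma> a * (\<Prod>j\<in>J. z a j))"
    using hyp[rule_format, of chi \<psi> "card A0"]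
    unfolding z_def \<psi>_def multilinear_ext_upset[OF Jr] by simp
  have composite: "\<psi> {j \<in> {..<r}. chi j (A \<inter> Cb j)} \<longleftrightarrow> A0 \<subseteq> A" for A
    using covered unfolding \<psi>_def chi_def J_def by blast
  have "tail_sig M T {..<n} (\<lambda>A. \<psi> {j \<in> {..<r}. chi j (A \<inter> Cb j)}) (n - card A0)
      = rel_quality M T {..<n} A0"
    unfolding composite using tail_sig_minimal_path[of "{..<n}" A0 "\<lambda>A. A0 \<subseteq> A"] A0 by simp
  moreover have "(\<Prod>j\<in>J. z a j) = 0" if a: "a \<in> tuples r Cb (card A0)" "a \<noteq> b" for a
  proof -
    have "\<not> (\<forall>j<r. b j \<le> a j)"
      using tuples_dominated_eq a block_profile_in_tuples[OF part A0(1)] unfolding b_def by blast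
    then obtain j where j: "j < r" "a j < card (A0 \<inter> Cb j)"
      unfolding b_def block_profile_def by auto
    then have "j \<in> J" unfolding J_def by auto
    moreover have "z a j = 0"
      unfolding z_def using j blocks[OF j(1)] chi_def
      by (intro tail_sig_below_minimal_path[of _ "A0 \<inter> Cb j"]) auto
    ultimately show ?thesis using finite_subset[OF Jr] by (meson finite_lessThan prod_zero_iff)
  qed
  then have "(\<Sum>a \<in> tuples r Cb (card A0). \<gamma> a * (\<Prod>j\<in>J. z a j)) = \<gamma> b * (\<Prod>j\<in>J. z b j)"
    using finite_tuples block_profile_in_tuples[OF part A0(1)] unfolding b_def
    by (subst sum.mono_neutral_right[of _ "{b}"]) (auto simp: b_def)
  moreover have "z b j = rel_quality M T (Cb j) (A0 \<inter> Cb j)" if "j \<in> J" for j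
  proof -
    have "j < r" "A0 \<inter> Cb j \<noteq> {}" using that unfolding J_def by auto
    then show ?thesis
      unfolding z_def b_def block_profile_def chi_def
      using blocks[OF \<open>j < r\<close>] by (simp add: tail_sig_minimal_path)
  qed
  moreover have "(\<Prod>j\<in>J. rel_quality M T (Cb j) (A0 \<inter> Cb j))
      = (\<Prod>j<r. rel_quality M T (Cb j) (A0 \<inter> Cb j))"
    using prob_space.prob_space[OF assms(1)] Jr
    by (intro prod.mono_neutral_left) (auto simp: J_def rel_quality_def)
  ultimately show ?thesis using hyp_A0 unfolding b_def by simp
qed

theorem theorem15:
  fixes M :: "'a measure" and T :: "nat \<Rightarrow> 'a \<Rightarrow> real"
    and n r :: nat and Cb :: "nat \<Rightarrow> nat set" and \<gamma> :: "(nat \<Rightarrow> nat) \<Rightarrow> real"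
  assumes "prob_space M"
    and "\<forall>i<n. T i \<in> borel_measurable M"
    and no_ties: "\<forall>i<n. \<forall>j<n. i \<noteq> j \<longrightarrow> (AE \<omega> in M. T i \<omega> \<noteq> T j \<omega>)"
    and "is_partition n r Cb"
    and hyp: "\<forall>(chi :: nat \<Rightarrow> nat set \<Rightarrow> bool) (\<psi> :: nat set \<Rightarrow> bool).
       (\<forall>j<r. semicoherent (Cb j) (chi j)) \<longrightarrow> semicoherent {..<r} \<psi> \<longrightarrow>
       (\<forall>k\<le>n.
          tail_sig M T {..<n} (\<lambda>A. \<psi> {j \<in> {..<r}. chi j (A \<inter> Cb j)}) (n - k) =
          (\<Sum>a \<in> tuples r Cb k. \<gamma> a *
             multilinear_ext r \<psi> (\<lambda>j. tail_sig M T (Cb j) (chi j) (card (Cb j) - a j))))"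
  shows "decomposable M T n r Cb"
proof -
  text \<open>gamma works for every nonempty set; the empty set has the zero profile and
    q({}) = q^{C_j}({}) = 1, so the constant is redefined to be 1 there.\<close>
  define c where "c a = (if a = (\<lambda>_. 0) then 1 else \<gamma> a)" for a :: "nat \<Rightarrow> nat"
  have "rel_quality M T {..<n} A = c (block_profile r Cb A) * (\<Prod>j<r. rel_quality M T (Cb j) (A \<inter> Cb j))"
    if A: "A \<subseteq> {..<n}" for A
  proof (cases "A = {}")
    case True
    then have "block_profile r Cb A = (\<lambda>_. 0)" by (simp add: block_profile_def fun_eq_iff)
    then show ?thesis using True prob_space.prob_space[OF assms(1)]
      by (simp add: c_def rel_quality_def)
  next
    case False
    have "card A = (\<Sum>j<r. block_profile r Cb A j)"
      using block_profile_in_tuples[OF assms(4) A] unfolding tuples_def by simp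
    then have "block_profile r Cb A \<noteq> (\<lambda>_. 0)"
      using False A finite_subset by fastforce
    then show ?thesis
      using quality_factorizes[OF assms(1,4) hyp A False] by (simp add: c_def)
  qed
  then show ?thesis unfolding decomposable_def block_profile_def by blast
qed

end
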